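(* Let $M=M_1\oplus M_2$ be a right $R$-module that is quasi-pseudo principally injective. Then $M_1$ is principally $M_2$-injective and $M_2$ is principally $M_1$-injective.
   Context: All rings are associative with identity and all modules are unitary right $R$-modules. A submodule $N$ of $M$ is called $M$-cyclic if $N\cong M/L$ for some submodule $L$ of $M$ (equivalently, $N$ is the image of an endomorphism of $M$). $M$ is quasi-pseudo principally injective if for every $M$-cyclic submodule $A$ of $M$, every $R$-monomorphism $A\to M$ extends to an $R$-endomorphism of $M$. For modules $X,Y$, $X$ is principally $Y$-injective if for every $Y$-cyclic submodule $A$ of $Y$, every $R$-homomorphism $A\to X$ extends to an $R$-homomorphism $Y\to X$. *)

theory Defs
  imports Main
begin

text \<open>A right R-module structure on the type 'm (the ambient module M is the
whole type), with ring R the type 'r; act x r stands for x r.\<close>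

definition right_module :: "('m::ab_group_add \<Rightarrow> 'r::ring_1 \<Rightarrow> 'm) \<Rightarrow> bool" where
  "right_module act \<longleftrightarrow>
     (\<forall>x y r. act (x + y) r = act x r + act y r) \<and>
     (\<forall>x r s. act x (r + s) = act x r + act x s) \<and>
     (\<forall>x r s. act x (r * s) = act (act x r) s) \<and>
     (\<forall>x. act x 1 = x)"

definition submodule :: "('m::ab_group_add \<Rightarrow> 'r::ring_1 \<Rightarrow> 'm) \<Rightarrow> 'm set \<Rightarrow> bool" where
  "submodule act N \<longleftrightarrow>
     0 \<in> N \<and> (\<forall>x\<in>N. \<forall>y\<in>N. x + y \<in> N) \<and> (\<forall>x\<in>N. - x \<in> N) \<and>
     (\<forall>x\<in>N. \<forall>r. act x r \<in> N)"

text \<open>R-homomorphisms from (submodule) A to (submodule) B, represented by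
functions on the ambient type; only their values on A matter.\<close>

definition module_hom :: "('m::ab_group_add \<Rightarrow> 'r::ring_1 \<Rightarrow> 'm) \<Rightarrow> 'm set \<Rightarrow> 'm set \<Rightarrow> ('m \<Rightarrow> 'm) \<Rightarrow> bool" where
  "module_hom act A B f \<longleftrightarrow>
     (\<forall>x\<in>A. f x \<in> B) \<and>
     (\<forall>x\<in>A. \<forall>y\<in>A. f (x + y) = f x + f y) \<and>
     (\<forall>x\<in>A. \<forall>r. f (act x r) = act (f x) r)"

definition cyclic_sub :: "('m::ab_group_add \<Rightarrow> 'r::ring_1 \<Rightarrow> 'm) \<Rightarrow> 'm set \<Rightarrow> 'm set \<Rightarrow> bool" where
  "cyclic_sub act Y A \<longleftrightarrow> (\<exists>h. module_hom act Y Y h \<and> h ` Y = A)"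

definition quasi_pseudo_principally_injective ::
  "('m::ab_group_add \<Rightarrow> 'r::ring_1 \<Rightarrow> 'm) \<Rightarrow> 'm set \<Rightarrow> bool" where
  "quasi_pseudo_principally_injective act M \<longleftrightarrow>
     (\<forall>A f. cyclic_sub act M A \<and> module_hom act A M f \<and> inj_on f A \<longrightarrow>
        (\<exists>g. module_hom act M M g \<and> (\<forall>x\<in>A. g x = f x)))"

definition principally_injective ::
  "('m::ab_group_add \<Rightarrow> 'r::ring_1 \<Rightarrow> 'm) \<Rightarrow> 'm set \<Rightarrow> 'm set \<Rightarrow> bool" where
  "principally_injective act X Y \<longleftrightarrow>
     (\<forall>A f. cyclic_sub act Y A \<and> module_hom act A X f \<longrightarrow>
        (\<exists>g. module_hom act Y X g \<and> (\<forall>x\<in>A. g x = f x)))"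

end

theory Submission
  imports Defs
begin

text \<open>Let A be an M2-cyclic submodule of M2 and f : A \<rightarrow> M1. Since A \<inter> M1 = 0, the
graph map a \<mapsto> a + f a is a monomorphism A \<rightarrow> M, and A is M-cyclic, being the image of an
endomorphism of M2 precomposed with the projection M \<rightarrow> M2. Quasi-pseudo principal
injectivity of M extends the graph map to an endomorphism g of M, and the M1-component of g
extends f. The other half follows by symmetry of the decomposition.\<close>

lemma module_hom_comp:
  assumes "module_hom act A B f" and "module_hom act B C g"
  shows "module_hom act A C (g \<circ> f)"
  using assms unfolding module_hom_def by auto

lemma cyclic_sub_via_epi:
  assumes "module_hom act X Y p" and "p ` X = Y" and "Y \<subseteq> X" and "cyclic_sub act Y A"
  shows "cyclic_sub act X A"
proof -
  obtain h where h: "module_hom act Y Y h" "h ` Y = A"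
    using assms(4) unfolding cyclic_sub_def by blast
  have "module_hom act X X (h \<circ> p)"
    using module_hom_comp[OF assms(1) h(1)] assms(3) unfolding module_hom_def by auto
  moreover have "(h \<circ> p) ` X = h ` p ` X"
    by (rule image_comp[symmetric])
  then have "(h \<circ> p) ` X = A"
    using assms(2) h(2) by simp
  ultimately show ?thesis unfolding cyclic_sub_def by blast
qed

locale internal_direct_sum =
  fixes act :: "'m::ab_group_add \<Rightarrow> 'r::ring_1 \<Rightarrow> 'm"
    and M1 M2 :: "'m set"
  assumes right_module: "right_module act"
    and submodule1: "submodule act M1"
    and submodule2: "submodule act M2"
    and summands_disjoint: "M1 \<inter> M2 = {0}"
    and summands_span: "\<And>x. \<exists>a b. a \<in> M1 \<and> b \<in> M2 \<and> x = a + b"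
begin

lemma summand_closed:
  shows "0 \<in> M1" "x \<in> M1 \<Longrightarrow> y \<in> M1 \<Longrightarrow> x - y \<in> M1" "x \<in> M1 \<Longrightarrow> act x r \<in> M1"
    and "0 \<in> M2" "x \<in> M2 \<Longrightarrow> y \<in> M2 \<Longrightarrow> x - y \<in> M2" "x \<in> M2 \<Longrightarrow> act x r \<in> M2"
  using submodule1 submodule2 unfolding submodule_def
  by (auto simp: diff_conv_add_uminus simp del: add_uminus_conv_diff)

lemma act_add_left: "act (x + y) r = act x r + act y r"
  using right_module unfolding right_module_def by blast

lemma decomposition_unique:
  assumes "a \<in> M1" "b \<in> M2" "a' \<in> M1" "b' \<in> M2" "a + b = a' + b'"
  shows "a = a'" and "b = b'"
proof -
  have "a - a' = b' - b"
    using assms(5) by (simp add: algebra_simps)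
  moreover have "a - a' \<in> M1" "b' - b \<in> M2"
    using assms(1-4) summand_closed by auto
  ultimately have "a - a' \<in> M1 \<inter> M2"
    by simp
  then have "a - a' = 0"
    using summands_disjoint by blast
  then show "a = a'" and "b = b'"
    using assms(5) by auto
qed

definition proj1 :: "'m \<Rightarrow> 'm" where
  "proj1 x = (THE a. a \<in> M1 \<and> x - a \<in> M2)"

definition proj2 :: "'m \<Rightarrow> 'm" where
  "proj2 x = x - proj1 x"

lemma proj_of_sum:
  assumes "a \<in> M1" "b \<in> M2"
  shows "proj1 (a + b) = a" and "proj2 (a + b) = b"
proof -
  have "a' = a" if "a' \<in> M1" "a + b - a' \<in> M2" for a'
    using decomposition_unique(1)[OF that(1,2) assms] by simp
  then have "(THE a'. a' \<in> M1 \<and> a + b - a' \<in> M2) = a"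
    using assms by (intro the_equality) auto
  then show "proj1 (a + b) = a" and "proj2 (a + b) = b"
    unfolding proj2_def proj1_def by simp_all
qed

lemma proj_decomposition: "proj1 x \<in> M1" "proj2 x \<in> M2" "proj1 x + proj2 x = x"
proof -
  obtain a b where "a \<in> M1" "b \<in> M2" "x = a + b"
    using summands_span by blast
  then show "proj1 x \<in> M1" "proj2 x \<in> M2" "proj1 x + proj2 x = x"
    using proj_of_sum by simp_all
qed

lemma proj_add: "proj1 (x + y) = proj1 x + proj1 y" "proj2 (x + y) = proj2 x + proj2 y"
proof -
  have "x + y = (proj1 x + proj1 y) + (proj2 x + proj2 y)"
    using proj_decomposition(3)[of x] proj_decomposition(3)[of y] by (simp add: algebra_simps)
  moreover have "proj1 x + proj1 y \<in> M1" "proj2 x + proj2 y \<in> M2"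
    using submodule1 submodule2 proj_decomposition(1,2) unfolding submodule_def by auto
  ultimately show "proj1 (x + y) = proj1 x + proj1 y" "proj2 (x + y) = proj2 x + proj2 y"
    using proj_of_sum by simp_all
qed

lemma proj_act: "proj1 (act x r) = act (proj1 x) r" "proj2 (act x r) = act (proj2 x) r"
proof -
  have "act x r = act (proj1 x + proj2 x) r"
    by (simp add: proj_decomposition(3))
  also have "\<dots> = act (proj1 x) r + act (proj2 x) r"
    by (rule act_add_left)
  finally have "act x r = act (proj1 x) r + act (proj2 x) r" .
  moreover have "act (proj1 x) r \<in> M1" "act (proj2 x) r \<in> M2"
    using summand_closed(3,6) proj_decomposition(1,2) by simp_all
  ultimately show "proj1 (act x r) = act (proj1 x) r" "proj2 (act x r) = act (proj2 x) r"
    using proj_of_sum by simp_all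
qed

lemma proj1_hom: "module_hom act UNIV M1 proj1"
  and proj2_hom: "module_hom act UNIV M2 proj2"
  unfolding module_hom_def using proj_decomposition(1,2) proj_add proj_act by simp_all

lemma proj2_image: "proj2 ` UNIV = M2"
proof -
  have "b = proj2 (0 + b)" if "b \<in> M2" for b
    using proj_of_sum(2)[OF summand_closed(1) that] by simp
  then show ?thesis
    using proj_decomposition(2) by blast
qed

lemma swap: "internal_direct_sum act M2 M1"
proof
  show "M2 \<inter> M1 = {0}"
    using summands_disjoint by blast
  show "\<exists>b a. b \<in> M2 \<and> a \<in> M1 \<and> x = b + a" for x
    using summands_span[of x] by (auto simp: add.commute)
qed (use right_module submodule1 submodule2 in auto)

lemma graph_hom:
  assumes "module_hom act A M1 f"
  shows "module_hom act A UNIV (\<lambda>a. a + f a)"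
  using assms act_add_left unfolding module_hom_def by (auto simp: algebra_simps)

lemma graph_inj_on:
  assumes "A \<subseteq> M2" and "\<forall>a\<in>A. f a \<in> M1"
  shows "inj_on (\<lambda>a. a + f a) A"
proof (rule inj_onI)
  fix x y
  assume "x \<in> A" "y \<in> A" "x + f x = y + f y"
  then show "x = y"
    using decomposition_unique(2)[of "f x" x "f y" y] assms by (auto simp: add.commute)
qed

lemma principally_injective_summand:
  assumes "quasi_pseudo_principally_injective act UNIV"
  shows "principally_injective act M1 M2"
  unfolding principally_injective_def
proof (intro allI impI, elim conjE)
  fix A f
  assume cyclic: "cyclic_sub act M2 A" and f: "module_hom act A M1 f"
  have "A \<subseteq> M2"
    using cyclic unfolding cyclic_sub_def module_hom_def by blast
  moreover have f_in: "\<forall>a\<in>A. f a \<in> M1"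
    using f unfolding module_hom_def by blast
  moreover have "cyclic_sub act UNIV A"
    using cyclic_sub_via_epi[OF proj2_hom proj2_image subset_UNIV cyclic] .
  ultimately obtain g where g: "module_hom act UNIV UNIV g"
    and g_ext: "\<forall>a\<in>A. g a = a + f a"
    using assms graph_hom[OF f] graph_inj_on
    unfolding quasi_pseudo_principally_injective_def by blast
  have "module_hom act M2 M1 (proj1 \<circ> g)"
    using module_hom_comp[OF g proj1_hom] unfolding module_hom_def by blast
  moreover have "(proj1 \<circ> g) a = f a" if "a \<in> A" for a
    using g_ext f_in proj_of_sum(1)[of "f a" a] \<open>A \<subseteq> M2\<close> that by (auto simp: add.commute)
  ultimately show "\<exists>g. module_hom act M2 M1 g \<and> (\<forall>a\<in>A. g a = f a)"
    by blast
qed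

end

theorem proposition2p9:
  fixes act :: "'m::ab_group_add \<Rightarrow> 'r::ring_1 \<Rightarrow> 'm"
    and M1 M2 :: "'m set"
  assumes "right_module act"
    and "submodule act M1" and "submodule act M2"
    and "M1 \<inter> M2 = {0}"
    and "{a + b | a b. a \<in> M1 \<and> b \<in> M2} = UNIV"
    and "quasi_pseudo_principally_injective act UNIV"
  shows "principally_injective act M1 M2 \<and> principally_injective act M2 M1"
proof -
  have "\<exists>a b. a \<in> M1 \<and> b \<in> M2 \<and> x = a + b" for x
    using assms(5) by blast
  then interpret internal_direct_sum act M1 M2
    using assms(1-4) by unfold_locales
  interpret swapped: internal_direct_sum act M2 M1
    by (rule swap)
  show ?thesis
    using principally_injective_summand swapped.principally_injective_summand assms(6)
    by simp
qed

end
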